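(* The reductions $\to_w$ and $\to_{w\neg gcv} := \to_{wm}\cup\to_{we}$ of the silly substitution calculus are confluent.
   Context: Terms: $t,u,s ::= x \mid \lambda x.t \mid t\,u \mid t[x\backslash u]$, where $t[x\backslash u]$ is an explicit substitution binding $x$ in $t$; terms up to $\alpha$-renaming; $\mathrm{fv}(t[x\backslash u]) = (\mathrm{fv}(t)\setminus\{x\})\cup \mathrm{fv}(u)$. Values: $v ::= \lambda x.t$. Substitution contexts: $S ::= \langle\cdot\rangle \mid S[x\backslash u]$. Weak contexts: $W ::= \langle\cdot\rangle \mid W\,t \mid t\,W \mid t[x\backslash W] \mid W[x\backslash u]$. $W\langle\langle t\rangle\rangle$ denotes plugging $t$ in $W$ where $W$ does not capture free variables of $t$. Root rules: $S\langle \lambda x.t\rangle u \mapsto_m S\langle t[x\backslash u]\rangle$; $W\langle\langle x\rangle\rangle[x\backslash u] \mapsto_{e} W\langle\langle u\rangle\rangle[x\backslash u]$ ($W$ weak context); $t[x\backslash S\langle v\rangle] \mapsto_{gcv} S\langle t\rangle$ if $x\notin\mathrm{fv}(t)$. $\to_{wm},\to_{we},\to_{wgcv}$ are their closures under weak contexts; $\to_w$ is their union. A relation $\to$ is confluent if whenever $t\to^* u_1$ and $t\to^* u_2$ there is $s$ with $u_1\to^* s$ and $u_2\to^* s$. *)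

theory Defs
  imports Main
begin

text \<open>Terms of the silly substitution calculus, up to alpha-renaming, represented
with de Bruijn indices. Lam t binds index 0 in t; Sub t u stands for t[x\u]
and binds index 0 in t (but not in u).\<close>

datatype trm = Var nat | Lam trm | App trm trm | Sub trm trm

fun lift :: "nat \<Rightarrow> nat \<Rightarrow> trm \<Rightarrow> trm" where
  "lift d c (Var i) = (if i < c then Var i else Var (i + d))"
| "lift d c (Lam t) = Lam (lift d (Suc c) t)"
| "lift d c (App t u) = App (lift d c t) (lift d c u)"
| "lift d c (Sub t u) = Sub (lift d (Suc c) t) (lift d c u)"

text \<open>Removing an unused index c: decrement every index > c.\<close>
fun down :: "nat \<Rightarrow> trm \<Rightarrow> trm" where
  "down c (Var i) = (if i < c then Var i else Var (i - 1))"
| "down c (Lam t) = Lam (down (Suc c) t)"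
| "down c (App t u) = App (down c t) (down c u)"
| "down c (Sub t u) = Sub (down (Suc c) t) (down c u)"

fun free_in :: "nat \<Rightarrow> trm \<Rightarrow> bool" where
  "free_in i (Var j) = (i = j)"
| "free_in i (Lam t) = free_in (Suc i) t"
| "free_in i (App t u) = (free_in i t \<or> free_in i u)"
| "free_in i (Sub t u) = (free_in (Suc i) t \<or> free_in i u)"

text \<open>Substitution contexts S: the list [u1,...,uk] represents
  <.>[x1\u1]...[xk\uk] (u1 innermost).\<close>
definition plugS :: "trm list \<Rightarrow> trm \<Rightarrow> trm" where
  "plugS us t = foldl Sub t us"

datatype wctx = Hole | AppL wctx trm | AppR trm wctx | SubL wctx trm | SubR trm wctx

fun plug :: "wctx \<Rightarrow> trm \<Rightarrow> trm" where
  "plug Hole t = t"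
| "plug (AppL W u) t = App (plug W t) u"
| "plug (AppR u W) t = App u (plug W t)"
| "plug (SubL W u) t = Sub (plug W t) u"
| "plug (SubR u W) t = Sub u (plug W t)"

fun depth :: "wctx \<Rightarrow> nat" where
  "depth Hole = 0"
| "depth (AppL W u) = depth W"
| "depth (AppR u W) = depth W"
| "depth (SubL W u) = Suc (depth W)"
| "depth (SubR u W) = depth W"

inductive root_m :: "trm \<Rightarrow> trm \<Rightarrow> bool" where
  "root_m (App (plugS us (Lam t)) u) (plugS us (Sub t (lift (length us) 0 u)))"

inductive root_e :: "trm \<Rightarrow> trm \<Rightarrow> bool" where
  "root_e (Sub (plug W (Var (depth W))) u) (Sub (plug W (lift (Suc (depth W)) 0 u)) u)"

inductive root_gcv :: "trm \<Rightarrow> trm \<Rightarrow> bool" where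
  "\<not> free_in 0 t \<Longrightarrow>
   root_gcv (Sub t (plugS us (Lam v))) (plugS us (lift (length us) 0 (down 0 t)))"

inductive wclos :: "(trm \<Rightarrow> trm \<Rightarrow> bool) \<Rightarrow> trm \<Rightarrow> trm \<Rightarrow> bool" for R where
  "R t s \<Longrightarrow> wclos R (plug W t) (plug W s)"

definition step_wm :: "trm \<Rightarrow> trm \<Rightarrow> bool" where "step_wm = wclos root_m"
definition step_we :: "trm \<Rightarrow> trm \<Rightarrow> bool" where "step_we = wclos root_e"
definition step_wgcv :: "trm \<Rightarrow> trm \<Rightarrow> bool" where "step_wgcv = wclos root_gcv"

definition step_w :: "trm \<Rightarrow> trm \<Rightarrow> bool" where
  "step_w t s \<longleftrightarrow> step_wm t s \<or> step_we t s \<or> step_wgcv t s"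

definition step_w_nogcv :: "trm \<Rightarrow> trm \<Rightarrow> bool" where
  "step_w_nogcv t s \<longleftrightarrow> step_wm t s \<or> step_we t s"

definition confluent :: "('a \<Rightarrow> 'a \<Rightarrow> bool) \<Rightarrow> bool" where
  "confluent R \<longleftrightarrow> (\<forall>t u1 u2. R\<^sup>*\<^sup>* t u1 \<and> R\<^sup>*\<^sup>* t u2 \<longrightarrow>
      (\<exists>s. R\<^sup>*\<^sup>* u1 s \<and> R\<^sup>*\<^sup>* u2 s))"

end

theory Submission
  imports Defs
begin

text \<open>Weak reduction has a syntax-directed presentation in which an e-step replaces a single
  weak occurrence of the substituted variable. Confluence follows from the Z-property of the
  development map \<open>t \<mapsto> t\<^sup>\<bullet>\<close>, which in one bottom-up pass contracts the m-redexes and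
  gcv-redexes of \<open>t\<close> and substitutes every explicit substitution into all weak occurrences of its
  variable: \<open>t \<rightarrow>\<^sup>* t\<^sup>\<bullet>\<close>, and \<open>t \<rightarrow> s\<close> implies \<open>s \<rightarrow>\<^sup>* t\<^sup>\<bullet> \<rightarrow>\<^sup>* s\<^sup>\<bullet>\<close>. The delicate case is the
  monotonicity of the development under an e-step \<open>t[x\u] \<rightarrow> t'[x\u]\<close>: the development of
  \<open>t\<close> reaches that of \<open>t'\<close> by weak steps interleaved with replacements of \<open>x\<close> by \<open>u\<^sup>\<bullet>\<close>, and
  these replacements are absorbed by the outer substitution.\<close>

lemma confluent_if_Z_property:
  assumes reach: "\<And>a. R\<^sup>*\<^sup>* a (f a)"
    and step_reaches: "\<And>a b. R a b \<Longrightarrow> R\<^sup>*\<^sup>* b (f a)"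
    and step_mono: "\<And>a b. R a b \<Longrightarrow> R\<^sup>*\<^sup>* (f a) (f b)"
  shows "confluent R"
proof -
  have mono: "R\<^sup>*\<^sup>* (f a) (f b)" if "R\<^sup>*\<^sup>* a b" for a b
    using that by (induction rule: rtranclp_induct) (auto intro: rtranclp_trans step_mono)
  have reaches_iterate: "\<exists>n. R\<^sup>*\<^sup>* b ((f ^^ n) a)" if "R\<^sup>*\<^sup>* a b" for a b
    using that
  proof (induction rule: rtranclp_induct)
    case base
    show ?case by (rule exI[of _ 0]) simp
  next
    case (step y z)
    then obtain n where "R\<^sup>*\<^sup>* y ((f ^^ n) a)" by blast
    then have "R\<^sup>*\<^sup>* (f y) ((f ^^ Suc n) a)" using mono by simp
    then show ?case using step_reaches[OF step(2)] by (meson rtranclp_trans)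
  qed
  have iterate_mono: "R\<^sup>*\<^sup>* ((f ^^ n) a) ((f ^^ (m + n)) a)" for n m a
    by (induction m) (auto intro: rtranclp_trans reach)
  show ?thesis unfolding confluent_def
  proof (intro allI impI, elim conjE)
    fix t u1 u2
    assume "R\<^sup>*\<^sup>* t u1" "R\<^sup>*\<^sup>* t u2"
    then obtain n m where "R\<^sup>*\<^sup>* u1 ((f ^^ n) t)" "R\<^sup>*\<^sup>* u2 ((f ^^ m) t)"
      using reaches_iterate by blast
    then have "R\<^sup>*\<^sup>* u1 ((f ^^ (m + n)) t)" "R\<^sup>*\<^sup>* u2 ((f ^^ (m + n)) t)"
      using iterate_mono[of n t m] iterate_mono[of m t n] by (auto simp: add.commute intro: rtranclp_trans)
    then show "\<exists>s. R\<^sup>*\<^sup>* u1 s \<and> R\<^sup>*\<^sup>* u2 s" by blast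
  qed
qed

lemma rtranclp_map_invariant:
  assumes "R\<^sup>*\<^sup>* x y" "I x"
    and "\<And>a b. R a b \<Longrightarrow> I a \<Longrightarrow> I b"
    and "\<And>a b. R a b \<Longrightarrow> I a \<Longrightarrow> S\<^sup>*\<^sup>* (f a) (f b)"
  shows "S\<^sup>*\<^sup>* (f x) (f y)"
proof -
  from assms(1) have "S\<^sup>*\<^sup>* (f x) (f y) \<and> I y"
    by (induction rule: rtranclp_induct) (use assms(2-4) in \<open>auto intro: rtranclp_trans\<close>)
  then show ?thesis ..
qed

lemma rtranclp_map:
  assumes "R\<^sup>*\<^sup>* x y" "\<And>a b. R a b \<Longrightarrow> S\<^sup>*\<^sup>* (f a) (f b)"
  shows "S\<^sup>*\<^sup>* (f x) (f y)"
  using rtranclp_map_invariant[of R x y "\<lambda>_. True" S f] assms by blast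

section \<open>Shifting indices\<close>

lemma lift_0 [simp]: "lift 0 c t = t"
  by (induction t arbitrary: c) auto

lemma lift_lift: "c \<le> c' \<Longrightarrow> c' \<le> c + e \<Longrightarrow> lift d c' (lift e c t) = lift (d + e) c t"
  by (induction t arbitrary: c c') auto

lemma lift_lift_comm: "c' \<le> c \<Longrightarrow> lift d (c + e) (lift e c' t) = lift e c' (lift d c t)"
proof (induction t arbitrary: c c')
  case (Lam t)
  then show ?case using Lam.IH[of "Suc c'" "Suc c"] by simp
next
  case (Sub t1 t2)
  then show ?case using Sub.IH(1)[of "Suc c'" "Suc c"] by simp
qed auto

lemma lift_lift_1: "lift n 0 (lift (Suc 0) 0 t) = lift (Suc n) 0 t"
  using lift_lift[of 0 0 1 n t] by simp

lemma lift_Suc_lift_1 [simp]: "lift d (Suc c) (lift (Suc 0) 0 t) = lift (Suc 0) 0 (lift d c t)"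
  using lift_lift_comm[of 0 c d 1 t] by simp

lemma free_in_lift:
  "free_in i (lift d c t) \<longleftrightarrow> (i < c \<and> free_in i t) \<or> (c + d \<le> i \<and> free_in (i - d) t)"
  by (induction t arbitrary: i c) (auto simp: Suc_diff_le)

lemma not_free_in_lift_0 [simp]: "i < d \<Longrightarrow> \<not> free_in i (lift d 0 t)"
  by (simp add: free_in_lift)

lemma down_lift [simp]: "down c (lift (Suc 0) c t) = t"
  by (induction t arbitrary: c) auto

lemma lift_down: "\<not> free_in c t \<Longrightarrow> lift (Suc 0) c (down c t) = t"
  by (induction t arbitrary: c) auto

lemma down_Suc_lift_0:
  assumes "\<not> free_in c t"
  shows "down (Suc (k + c)) (lift (Suc k) 0 t) = lift (Suc k) 0 (down c t)"
proof -
  have "lift (Suc k) 0 t = lift (Suc 0) (Suc (k + c)) (lift (Suc k) 0 (down c t))"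
    using lift_down[OF assms] lift_lift_comm[of 0 c 1 "Suc k" "down c t"] by (simp add: add.commute)
  then show ?thesis by simp
qed

lemma down_lift_ge: "c \<le> j \<Longrightarrow> down c (lift (Suc j) 0 t) = lift j 0 t"
  using lift_lift[of 0 c j 1 t] down_lift[of c "lift j 0 t"] by simp

lemma down_0_lift_Suc:
  assumes "\<not> free_in 0 t"
  shows "down 0 (lift d (Suc c) t) = lift d c (down 0 t)"
proof -
  have "lift d (Suc c) t = lift (Suc 0) 0 (lift d c (down 0 t))"
    by (metis lift_down[OF assms] lift_Suc_lift_1)
  then show ?thesis by simp
qed

lemma free_in_down:
  assumes "\<not> free_in c t" "free_in i (down c t)"
  shows "free_in (if i < c then i else Suc i) t"
proof -
  have "free_in (if i < c then i else Suc i) (lift (Suc 0) c (down c t))"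
    using assms(2) by (auto simp: free_in_lift)
  then show ?thesis using lift_down[OF assms(1)] by simp
qed

section \<open>Answers and the contracta of the root rules\<close>

fun is_answer :: "trm \<Rightarrow> bool" where
  "is_answer (Lam t) = True"
| "is_answer (Sub t u) = is_answer t"
| "is_answer (Var i) = False"
| "is_answer (App t u) = False"

text \<open>For an answer \<open>S\<langle>\<lambda>x.t\<rangle>\<close>, \<open>contract_m (S\<langle>\<lambda>x.t\<rangle>) u = S\<langle>t[x\u]\<rangle>\<close> and
  \<open>contract_gcv t (S\<langle>v\<rangle>) = S\<langle>t\<rangle>\<close>, the arguments being lifted past the binders of \<open>S\<close>.
  The equations for non-answers are junk, chosen to make the commutation lemmas unconditional.\<close>

fun contract_m :: "trm \<Rightarrow> trm \<Rightarrow> trm" where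
  "contract_m (Lam t) u = Sub t u"
| "contract_m (Sub t w) u = Sub (contract_m t (lift 1 0 u)) w"
| "contract_m (Var i) u = App (Var i) u"
| "contract_m (App t w) u = App (App t w) u"

fun contract_gcv :: "trm \<Rightarrow> trm \<Rightarrow> trm" where
  "contract_gcv t (Lam v) = t"
| "contract_gcv t (Sub r w) = Sub (contract_gcv (lift 1 0 t) r) w"
| "contract_gcv t (Var i) = Sub (lift 1 0 t) (Var i)"
| "contract_gcv t (App r w) = Sub (lift 1 0 t) (App r w)"

lemma is_answer_lift [simp]: "is_answer (lift d c t) = is_answer t"
  by (induction t arbitrary: c) auto

lemma is_answer_down [simp]: "is_answer (down c t) = is_answer t"
  by (induction t arbitrary: c) auto

lemma is_answer_contract_gcv [simp]: "is_answer r \<Longrightarrow> is_answer (contract_gcv t r) = is_answer t"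
  by (induction t r rule: contract_gcv.induct) auto

lemma lift_contract_m: "lift d c (contract_m t u) = contract_m (lift d c t) (lift d c u)"
  by (induction t u arbitrary: c rule: contract_m.induct) auto

lemma lift_contract_gcv: "lift d c (contract_gcv t r) = contract_gcv (lift d c t) (lift d c r)"
  by (induction t r arbitrary: c rule: contract_gcv.induct) auto

lemma down_contract_m:
  assumes "\<not> free_in c t" "\<not> free_in c u"
  shows "down c (contract_m t u) = contract_m (down c t) (down c u)"
  by (metis assms down_lift lift_contract_m lift_down)

lemma down_contract_gcv:
  assumes "\<not> free_in c t" "\<not> free_in c r"
  shows "down c (contract_gcv t r) = contract_gcv (down c t) (down c r)"
  by (metis assms down_lift lift_contract_gcv lift_down)

lemma free_in_contract_m:
  "is_answer t \<Longrightarrow> free_in i (contract_m t u) \<longleftrightarrow> free_in i t \<or> free_in i u"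
  by (induction t u arbitrary: i rule: contract_m.induct) (auto simp: free_in_lift)

lemma free_in_contract_gcv: "free_in i (contract_gcv t r) \<Longrightarrow> free_in i t \<or> free_in i r"
proof (induction t r arbitrary: i rule: contract_gcv.induct)
  case (2 t r w)
  then show ?case using "2.IH"[of "Suc i"] by (auto simp: free_in_lift)
qed (auto simp: free_in_lift)

lemma contract_gcv_contract_m:
  "is_answer t \<Longrightarrow> is_answer r \<Longrightarrow> contract_gcv (contract_m t u) r = contract_m (contract_gcv t r) u"
  by (induction "contract_m t u" r arbitrary: t u rule: contract_gcv.induct) (auto simp: lift_contract_m)

lemma contract_gcv_assoc:
  "is_answer r \<Longrightarrow> contract_gcv (contract_gcv t q) r = contract_gcv t (contract_gcv q r)"
  by (induction "contract_gcv t q" r arbitrary: t q rule: contract_gcv.induct)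
    (auto simp: lift_contract_gcv)

section \<open>Weak substitution of an index\<close>

fun wsubst :: "nat \<Rightarrow> trm \<Rightarrow> trm \<Rightarrow> trm" where
  "wsubst k u (Var i) = (if i = k then lift (Suc k) 0 u else Var i)"
| "wsubst k u (Lam t) = Lam t"
| "wsubst k u (App t w) = App (wsubst k u t) (wsubst k u w)"
| "wsubst k u (Sub t w) = Sub (wsubst (Suc k) u t) (wsubst k u w)"

text \<open>\<open>wsubst k u\<close> substitutes \<open>u\<close> for the weak occurrences of index \<open>k\<close>, those not below a
  \<open>Lam\<close>, and \<open>wrepl k u\<close> replaces one of them; \<open>u\<close> lives outside the \<open>k + 1\<close> binders
  enclosing such an occurrence, hence the lifting.\<close>

inductive wrepl :: "nat \<Rightarrow> trm \<Rightarrow> trm \<Rightarrow> trm \<Rightarrow> bool" where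
  var: "wrepl k u (Var k) (lift (Suc k) 0 u)"
| appL: "wrepl k u t t' \<Longrightarrow> wrepl k u (App t w) (App t' w)"
| appR: "wrepl k u w w' \<Longrightarrow> wrepl k u (App t w) (App t w')"
| subL: "wrepl (Suc k) u t t' \<Longrightarrow> wrepl k u (Sub t w) (Sub t' w)"
| subR: "wrepl k u w w' \<Longrightarrow> wrepl k u (Sub t w) (Sub t w')"

lemma wsubst_not_free_in: "\<not> free_in k t \<Longrightarrow> wsubst k u t = t"
  by (induction k u t rule: wsubst.induct) auto

lemma wsubst_idem [simp]: "wsubst k u (wsubst k u t) = wsubst k u t"
  by (induction k u t rule: wsubst.induct) (auto simp: wsubst_not_free_in)

lemma is_answer_wsubst [simp]: "is_answer t \<Longrightarrow> is_answer (wsubst k u t)"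
  by (induction k u t rule: wsubst.induct) auto

lemma lift_wsubst_above: "c \<le> k \<Longrightarrow> lift d c (wsubst k u t) = wsubst (k + d) u (lift d c t)"
proof (induction k u t arbitrary: c rule: wsubst.induct)
  case (1 k u i)
  then show ?case using lift_lift[of 0 c "Suc k" d u] by (auto simp: add.commute)
qed auto

lemma lift_wsubst_below:
  "k < c \<Longrightarrow> lift d c (wsubst k u t) = wsubst k (lift d (c - Suc k) u) (lift d c t)"
proof (induction k u t arbitrary: c rule: wsubst.induct)
  case (1 k u i)
  then show ?case using lift_lift_comm[of 0 "c - Suc k" d "Suc k" u] by auto
qed auto

lemma lift_Suc_0_wsubst [simp]:
  "lift (Suc 0) 0 (wsubst k u t) = wsubst (Suc k) u (lift (Suc 0) 0 t)"
  using lift_wsubst_above[of 0 k "Suc 0" u t] by simp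

lemma free_in_wsubst:
  "free_in n (wsubst k u t) \<Longrightarrow> free_in n t \<or> (k < n \<and> free_in (n - Suc k) u)"
proof (induction k u t arbitrary: n rule: wsubst.induct)
  case (4 k u t w)
  then show ?case using "4.IH"(1)[of "Suc n"] by auto
qed (auto simp: free_in_lift split: if_splits)

lemma wsubst_contract_m_left:
  "is_answer t \<Longrightarrow> wsubst k u (contract_m (wsubst k u t) v) = wsubst k u (contract_m t v)"
  by (induction t v arbitrary: k rule: contract_m.induct) auto

lemma wsubst_contract_m:
  "is_answer t \<Longrightarrow> wsubst k u (contract_m (wsubst k u t) (wsubst k u v)) = wsubst k u (contract_m t v)"
proof -
  assume "is_answer t"
  moreover have "wsubst k u (contract_m t (wsubst k u v)) = wsubst k u (contract_m t v)"
    using \<open>is_answer t\<close> by (induction t v arbitrary: k rule: contract_m.induct) auto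
  ultimately show ?thesis by (simp add: wsubst_contract_m_left)
qed

lemma wsubst_contract_gcv:
  "is_answer r \<Longrightarrow> wsubst k u (contract_gcv t r) = contract_gcv (wsubst k u t) (wsubst k u r)"
  by (induction t r arbitrary: k rule: contract_gcv.induct) auto

lemma wrepl_free_in: "wrepl k u t t' \<Longrightarrow> free_in k t"
  by (induction rule: wrepl.induct) auto

lemma free_in_wrepl:
  "wrepl k u t t' \<Longrightarrow> free_in n t' \<Longrightarrow> free_in n t \<or> (k < n \<and> free_in (n - Suc k) u)"
proof (induction arbitrary: n rule: wrepl.induct)
  case (subL k u t t' w)
  then show ?case using subL.IH[of "Suc n"] by auto
qed (auto simp: free_in_lift)

lemma free_in_wrepl_below: "wrepl k u t t' \<Longrightarrow> n < k \<Longrightarrow> free_in n t' \<longleftrightarrow> free_in n t"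
  by (induction arbitrary: n rule: wrepl.induct) (auto simp: free_in_lift)

lemma is_answer_wrepl: "wrepl k u t t' \<Longrightarrow> is_answer t \<Longrightarrow> is_answer t'"
  by (induction rule: wrepl.induct) auto

lemma wrepl_lift_above:
  "wrepl k u t t' \<Longrightarrow> wrepl k (lift d c u) (lift d (Suc (k + c)) t) (lift d (Suc (k + c)) t')"
proof (induction rule: wrepl.induct)
  case (var k u)
  have "lift d (Suc (k + c)) (lift (Suc k) 0 u) = lift (Suc k) 0 (lift d c u)"
    using lift_lift_comm[of 0 c d "Suc k" u] by (simp add: add.commute)
  then show ?case using wrepl.var[of k "lift d c u"] by simp
qed (auto intro: wrepl.intros)

lemma wrepl_lift_below: "wrepl k u t t' \<Longrightarrow> c \<le> k \<Longrightarrow> wrepl (k + n) u (lift n c t) (lift n c t')"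
proof (induction arbitrary: c rule: wrepl.induct)
  case (var k u)
  have "lift n c (lift (Suc k) 0 u) = lift (Suc (k + n)) 0 u"
    using lift_lift[of 0 c "Suc k" n u] var by (simp add: add.commute)
  then show ?case using wrepl.var[of "k + n" u] var by simp
next
  case (subL k u t t' w)
  then show ?case using wrepl.subL by fastforce
qed (auto intro: wrepl.intros)

lemma wrepl_down_below:
  "wrepl (Suc k) u t t' \<Longrightarrow> c \<le> k \<Longrightarrow> \<not> free_in c t \<Longrightarrow> wrepl k u (down c t) (down c t')"
proof (induction "Suc k" u t t' arbitrary: k c rule: wrepl.induct)
  case (var u)
  then show ?case using wrepl.var[of k u] by (simp add: down_lift_ge)
next
  case (subL u t t' w)
  then show ?case by (auto intro: wrepl.subL)
qed (auto intro: wrepl.intros)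

lemma wrepl_down_above:
  "wrepl k u t t' \<Longrightarrow> \<not> free_in (Suc (k + c)) t \<Longrightarrow> \<not> free_in c u
   \<Longrightarrow> wrepl k (down c u) (down (Suc (k + c)) t) (down (Suc (k + c)) t')"
proof (induction rule: wrepl.induct)
  case (var k u)
  then show ?case using wrepl.var[of k "down c u"] by (simp add: down_Suc_lift_0)
qed (auto intro: wrepl.intros)

lemma wrepl_contract_m:
  "wrepl k u t t' \<Longrightarrow> is_answer t \<Longrightarrow> wrepl k u (contract_m t v) (contract_m t' v)"
  by (induction arbitrary: v rule: wrepl.induct) (auto intro: wrepl.intros dest: is_answer_wrepl)

lemma wrepl_contract_gcv:
  "wrepl k u r r' \<Longrightarrow> is_answer r \<Longrightarrow> wrepl k u (contract_gcv t r) (contract_gcv t r')"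
  by (induction arbitrary: t rule: wrepl.induct) (auto intro: wrepl.intros dest: is_answer_wrepl)

lemma wsubst_wrepl: "wrepl k u t t' \<Longrightarrow> wsubst k u t' = wsubst k u t"
  by (induction rule: wrepl.induct) (auto simp: wsubst_not_free_in)

lemma wrepl_wsubst_below: "wrepl k u t t' \<Longrightarrow> i < k \<Longrightarrow> wrepl k u (wsubst i v t) (wsubst i v t')"
proof (induction arbitrary: i rule: wrepl.induct)
  case (var k u)
  then show ?case using wrepl.var[of k u] by (simp add: wsubst_not_free_in)
qed (auto intro: wrepl.intros)

lemma wrepl_wsubst_above:
  "wrepl j w t t' \<Longrightarrow> \<exists>t''. wrepl j (wsubst k u w) (wsubst (Suc (k + j)) u t) t''
     \<and> wsubst (Suc (k + j)) u t'' = wsubst (Suc (k + j)) u t'"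
proof (induction rule: wrepl.induct)
  case (var j w)
  have "wsubst (Suc (k + j)) u (lift (Suc j) 0 w') = lift (Suc j) 0 (wsubst k u w')" for w'
    using lift_wsubst_above[of 0 k "Suc j" u w'] by (simp add: add.commute)
  then show ?case by (auto intro: wrepl.var)
qed (auto intro: wrepl.intros)

lemma wrepl_star_wsubst: "(wrepl k u)\<^sup>*\<^sup>* t (wsubst k u t)"
proof (induction t arbitrary: k)
  case (App t w)
  have "(wrepl k u)\<^sup>*\<^sup>* (App t w) (App (wsubst k u t) w)"
    by (rule rtranclp_map[OF App.IH(1)]) (auto intro: wrepl.appL)
  moreover have "(wrepl k u)\<^sup>*\<^sup>* (App (wsubst k u t) w) (App (wsubst k u t) (wsubst k u w))"
    by (rule rtranclp_map[OF App.IH(2)]) (auto intro: wrepl.appR)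
  ultimately show ?case by simp
next
  case (Sub t w)
  have "(wrepl k u)\<^sup>*\<^sup>* (Sub t w) (Sub (wsubst (Suc k) u t) w)"
    by (rule rtranclp_map[OF Sub.IH(1)]) (auto intro: wrepl.subL)
  moreover have "(wrepl k u)\<^sup>*\<^sup>* (Sub (wsubst (Suc k) u t) w) (Sub (wsubst (Suc k) u t) (wsubst k u w))"
    by (rule rtranclp_map[OF Sub.IH(2)]) (auto intro: wrepl.subR)
  ultimately show ?case by simp
qed (auto intro: wrepl.var)

section \<open>A syntax-directed presentation of weak reduction\<close>

inductive wstep :: "bool \<Rightarrow> trm \<Rightarrow> trm \<Rightarrow> bool" for g where
  m: "is_answer t \<Longrightarrow> wstep g (App t u) (contract_m t u)"
| e: "wrepl 0 u t t' \<Longrightarrow> wstep g (Sub t u) (Sub t' u)"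
| gcv: "g \<Longrightarrow> is_answer r \<Longrightarrow> wstep g (Sub (lift (Suc 0) 0 t) r) (contract_gcv t r)"
| appL: "wstep g t t' \<Longrightarrow> wstep g (App t u) (App t' u)"
| appR: "wstep g u u' \<Longrightarrow> wstep g (App t u) (App t u')"
| subL: "wstep g t t' \<Longrightarrow> wstep g (Sub t u) (Sub t' u)"
| subR: "wstep g u u' \<Longrightarrow> wstep g (Sub t u) (Sub t u')"

lemma plugS_Nil [simp]: "plugS [] t = t"
  by (simp add: plugS_def)

lemma plugS_snoc [simp]: "plugS (us @ [u]) t = Sub (plugS us t) u"
  by (simp add: plugS_def)

lemma is_answer_iff_plugS: "is_answer t \<longleftrightarrow> (\<exists>us s. t = plugS us (Lam s))"
proof
  show "is_answer t \<Longrightarrow> \<exists>us s. t = plugS us (Lam s)"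
  proof (induction t)
    case (Lam s)
    then show ?case by (metis plugS_Nil)
  next
    case (Sub t u)
    then obtain us s where "t = plugS us (Lam s)" by auto
    then have "Sub t u = plugS (us @ [u]) (Lam s)" by simp
    then show ?case by blast
  qed auto
  have "is_answer (plugS us (Lam s))" for us s
    by (induction us rule: rev_induct) auto
  then show "\<exists>us s. t = plugS us (Lam s) \<Longrightarrow> is_answer t" by blast
qed

lemma contract_m_plugS: "contract_m (plugS us (Lam s)) u = plugS us (Sub s (lift (length us) 0 u))"
  by (induction us arbitrary: u rule: rev_induct) (auto simp: lift_lift_1)

lemma contract_gcv_plugS: "contract_gcv t (plugS us (Lam v)) = plugS us (lift (length us) 0 t)"
  by (induction us arbitrary: t rule: rev_induct) (auto simp: lift_lift_1)

lemma root_m_iff: "root_m a b \<longleftrightarrow> (\<exists>t u. a = App t u \<and> is_answer t \<and> b = contract_m t u)"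
  by (auto simp: root_m.simps is_answer_iff_plugS contract_m_plugS; blast)

lemma root_gcv_iff:
  "root_gcv a b \<longleftrightarrow> (\<exists>t r. a = Sub (lift (Suc 0) 0 t) r \<and> is_answer r \<and> b = contract_gcv t r)"
proof
  assume "root_gcv a b"
  then show "\<exists>t r. a = Sub (lift (Suc 0) 0 t) r \<and> is_answer r \<and> b = contract_gcv t r"
  proof cases
    case (1 t us v)
    then show ?thesis
      by (intro exI[of _ "down 0 t"] exI[of _ "plugS us (Lam v)"])
        (auto simp: is_answer_iff_plugS contract_gcv_plugS lift_down)
  qed
next
  assume "\<exists>t r. a = Sub (lift (Suc 0) 0 t) r \<and> is_answer r \<and> b = contract_gcv t r"
  then show "root_gcv a b"
    using root_gcv.intros[of "lift (Suc 0) 0 t" for t]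
    by (auto simp: is_answer_iff_plugS contract_gcv_plugS)
qed

lemma wrepl_plug:
  "wrepl k u (plug W (Var (k + depth W))) (plug W (lift (Suc (k + depth W)) 0 u))"
proof (induction W arbitrary: k)
  case (SubL W w)
  then show ?case using SubL.IH[of "Suc k"] by (simp add: wrepl.subL)
qed (auto intro: wrepl.intros)

lemma wrepl_plug_form:
  "wrepl k u t t' \<Longrightarrow> \<exists>W. t = plug W (Var (k + depth W)) \<and> t' = plug W (lift (Suc (k + depth W)) 0 u)"
proof (induction rule: wrepl.induct)
  case (var k u)
  show ?case by (rule exI[of _ Hole]) simp
next
  case (appL k u t t' w)
  then show ?case by (metis plug.simps(2) depth.simps(2))
next
  case (appR k u w w' t)
  then show ?case by (metis plug.simps(3) depth.simps(3))
next
  case (subL k u t t' w)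
  then show ?case by (metis plug.simps(4) depth.simps(4) add_Suc add_Suc_right)
next
  case (subR k u w w' t)
  then show ?case by (metis plug.simps(5) depth.simps(5))
qed

lemma wrepl_iff_plug:
  "wrepl k u t t' \<longleftrightarrow> (\<exists>W. t = plug W (Var (k + depth W)) \<and> t' = plug W (lift (Suc (k + depth W)) 0 u))"
  using wrepl_plug wrepl_plug_form by blast

lemma root_e_iff: "root_e a b \<longleftrightarrow> (\<exists>t t' u. a = Sub t u \<and> b = Sub t' u \<and> wrepl 0 u t t')"
  by (auto simp: root_e.simps wrepl_iff_plug)

lemma wstep_plug: "wstep g t s \<Longrightarrow> wstep g (plug W t) (plug W s)"
  by (induction W) (auto intro: wstep.intros)

lemma wclos_appL: "wclos R a b \<Longrightarrow> wclos R (App a c) (App b c)"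
  by (induction rule: wclos.induct) (metis plug.simps(2) wclos.intros)

lemma wclos_appR: "wclos R a b \<Longrightarrow> wclos R (App c a) (App c b)"
  by (induction rule: wclos.induct) (metis plug.simps(3) wclos.intros)

lemma wclos_subL: "wclos R a b \<Longrightarrow> wclos R (Sub a c) (Sub b c)"
  by (induction rule: wclos.induct) (metis plug.simps(4) wclos.intros)

lemma wclos_subR: "wclos R a b \<Longrightarrow> wclos R (Sub c a) (Sub c b)"
  by (induction rule: wclos.induct) (metis plug.simps(5) wclos.intros)

lemma wclos_root: "R a b \<Longrightarrow> wclos R a b"
  using wclos.intros[of R a b Hole] by simp

lemma wstep_iff: "wstep g a b \<longleftrightarrow> step_wm a b \<or> step_we a b \<or> (g \<and> step_wgcv a b)"
  unfolding step_wm_def step_we_def step_wgcv_def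
proof
  show "wstep g a b \<Longrightarrow> wclos root_m a b \<or> wclos root_e a b \<or> (g \<and> wclos root_gcv a b)"
    by (induction rule: wstep.induct)
      (auto intro: wclos_root wclos_appL wclos_appR wclos_subL wclos_subR
        simp: root_m_iff root_e_iff root_gcv_iff)
  show "wclos root_m a b \<or> wclos root_e a b \<or> (g \<and> wclos root_gcv a b) \<Longrightarrow> wstep g a b"
    by (auto elim!: wclos.cases intro!: wstep_plug intro: wstep.intros
        simp: root_m_iff root_e_iff root_gcv_iff)
qed

lemma step_w_eq_wstep: "step_w = wstep True"
  by (intro ext) (simp add: step_w_def wstep_iff)

lemma step_w_nogcv_eq_wstep: "step_w_nogcv = wstep False"
  by (intro ext) (simp add: step_w_nogcv_def wstep_iff)

lemma wstep_lift: "wstep g t t' \<Longrightarrow> wstep g (lift d c t) (lift d c t')"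
proof (induction arbitrary: c rule: wstep.induct)
  case (m t u)
  then show ?case by (simp add: lift_contract_m wstep.m)
next
  case (e u t t')
  then show ?case using wrepl_lift_above[OF e, of d c] by (simp add: wstep.e)
next
  case (gcv r t)
  then show ?case using wstep.gcv[of g "lift d c r" "lift d c t"] by (simp add: lift_contract_gcv)
qed (auto intro: wstep.intros)

lemma is_answer_wstep: "wstep g t t' \<Longrightarrow> is_answer t \<Longrightarrow> is_answer t'"
  by (induction rule: wstep.induct) (auto simp: is_answer_wrepl)

lemma free_in_wstep: "wstep g t t' \<Longrightarrow> free_in n t' \<Longrightarrow> free_in n t"
proof (induction arbitrary: n rule: wstep.induct)
  case (m t u)
  then show ?case by (simp add: free_in_contract_m)
next
  case (e u t t')
  then show ?case using free_in_wrepl[OF e.hyps, of "Suc n"] by auto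
next
  case (gcv r t)
  then show ?case using free_in_contract_gcv[of n t r] by (auto simp: free_in_lift)
qed auto

lemma wstep_down: "wstep g t t' \<Longrightarrow> \<not> free_in c t \<Longrightarrow> wstep g (down c t) (down c t')"
proof (induction arbitrary: c rule: wstep.induct)
  case (m t u)
  then show ?case by (simp add: down_contract_m wstep.m)
next
  case (e u t t')
  then show ?case using wrepl_down_above[OF e.hyps, of c] by (simp add: wstep.e)
next
  case (gcv r t)
  then have "\<not> free_in c t" "\<not> free_in c r" by (auto simp: free_in_lift)
  then show ?case
    using wstep.gcv[of g "down c r" "down c t"] gcv down_Suc_lift_0[of c t 0]
    by (simp add: down_contract_gcv)
qed (auto intro: wstep.intros)

lemma wstep_contract_m: "wstep g t t' \<Longrightarrow> is_answer t \<Longrightarrow> wstep g (contract_m t u) (contract_m t' u)"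
proof (induction arbitrary: u rule: wstep.induct)
  case (e w t t')
  then show ?case by (simp add: wrepl_contract_m wstep.e)
next
  case (gcv r t)
  then have "wstep g (Sub (lift (Suc 0) 0 (contract_m t u)) r) (contract_gcv (contract_m t u) r)"
    by (simp add: wstep.gcv)
  then show ?case using gcv by (simp add: lift_contract_m contract_gcv_contract_m)
qed (auto intro: wstep.intros)

lemma wstep_contract_gcv: "wstep g r r' \<Longrightarrow> is_answer r \<Longrightarrow> wstep g (contract_gcv t r) (contract_gcv t r')"
proof (induction arbitrary: t rule: wstep.induct)
  case (e w q q')
  then show ?case by (simp add: wrepl_contract_gcv wstep.e)
next
  case (gcv r q)
  then have "wstep g (Sub (lift (Suc 0) 0 (contract_gcv t q)) r) (contract_gcv (contract_gcv t q) r)"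
    by (simp add: wstep.gcv)
  then show ?case using gcv by (simp add: lift_contract_gcv contract_gcv_assoc)
qed (auto intro: wstep.intros)

text \<open>Only up to a final \<open>wsubst\<close>, since an m-step can move occurrences from below a \<open>Lam\<close>
  into weak position.\<close>

lemma wstep_wsubst: "wstep g t t' \<Longrightarrow> \<exists>t''. wstep g (wsubst k u t) t'' \<and> wsubst k u t'' = wsubst k u t'"
proof (induction arbitrary: k rule: wstep.induct)
  case (m t v)
  then have "wstep g (wsubst k u (App t v)) (contract_m (wsubst k u t) (wsubst k u v))"
    by (simp add: wstep.m)
  then show ?case using m by (metis wsubst_contract_m)
next
  case (e w t t')
  obtain t'' where "wrepl 0 (wsubst k u w) (wsubst (Suc k) u t) t''"
    "wsubst (Suc k) u t'' = wsubst (Suc k) u t'"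
    using wrepl_wsubst_above[OF e.hyps, of k u] by auto
  then show ?case by (intro exI[of _ "Sub t'' (wsubst k u w)"]) (simp add: wstep.e)
next
  case (gcv r t)
  then have "wstep g (Sub (lift (Suc 0) 0 (wsubst k u t)) (wsubst k u r))
      (contract_gcv (wsubst k u t) (wsubst k u r))"
    by (intro wstep.gcv) simp_all
  then have "wstep g (wsubst k u (Sub (lift (Suc 0) 0 t) r)) (contract_gcv (wsubst k u t) (wsubst k u r))"
    by simp
  then show ?case using gcv by (metis wsubst_contract_gcv wsubst_idem)
qed (fastforce intro: wstep.intros)+

section \<open>Weak steps interleaved with replacements\<close>

text \<open>With \<open>rp = False\<close> this is \<open>(wstep g)\<^sup>*\<^sup>*\<close>, so each congruence lemma below serves
  both relations; the replacements are needed to simulate an e-step on developments.\<close>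

definition msteps :: "bool \<Rightarrow> bool \<Rightarrow> nat \<Rightarrow> trm \<Rightarrow> trm \<Rightarrow> trm \<Rightarrow> bool" where
  "msteps g rp k u = (\<lambda>s t. wstep g s t \<or> (rp \<and> wrepl k u s t))\<^sup>*\<^sup>*"

lemma msteps_False [simp]: "msteps g False k u = (wstep g)\<^sup>*\<^sup>*"
  by (simp add: msteps_def)

lemma msteps_refl [simp]: "msteps g rp k u t t"
  by (simp add: msteps_def)

lemma msteps_trans: "msteps g rp k u s t \<Longrightarrow> msteps g rp k u t v \<Longrightarrow> msteps g rp k u s v"
  unfolding msteps_def by (rule rtranclp_trans)

lemma msteps_wsteps: "(wstep g)\<^sup>*\<^sup>* s t \<Longrightarrow> msteps g rp k u s t"
  unfolding msteps_def by (erule rtranclp_mono[THEN predicate2D, rotated]) auto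

lemma msteps_wstep: "wstep g s t \<Longrightarrow> msteps g rp k u s t"
  by (simp add: msteps_def r_into_rtranclp)

lemma msteps_wrepl: "wrepl k u s t \<Longrightarrow> msteps g True k u s t"
  by (simp add: msteps_def r_into_rtranclp)

lemma msteps_map_invariant:
  assumes "msteps g rp k u s t" "I s"
    and "\<And>a b. wstep g a b \<Longrightarrow> I a \<Longrightarrow> I b"
    and "\<And>a b. rp \<Longrightarrow> wrepl k u a b \<Longrightarrow> I a \<Longrightarrow> I b"
    and "\<And>a b. wstep g a b \<Longrightarrow> I a \<Longrightarrow> msteps g rp k' u' (f a) (f b)"
    and "\<And>a b. rp \<Longrightarrow> wrepl k u a b \<Longrightarrow> I a \<Longrightarrow> msteps g rp k' u' (f a) (f b)"
  shows "msteps g rp k' u' (f s) (f t)"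
  using assms(1,2) unfolding msteps_def
  by (rule rtranclp_map_invariant) (use assms(3-6) in \<open>auto simp: msteps_def\<close>)

lemma msteps_map:
  assumes "msteps g rp k u s t"
    and "\<And>a b. wstep g a b \<Longrightarrow> msteps g rp k' u' (f a) (f b)"
    and "\<And>a b. rp \<Longrightarrow> wrepl k u a b \<Longrightarrow> msteps g rp k' u' (f a) (f b)"
  shows "msteps g rp k' u' (f s) (f t)"
  using msteps_map_invariant[where I = "\<lambda>_. True", OF assms(1)] assms(2,3) by blast

lemma msteps_appL: "msteps g rp k u t t' \<Longrightarrow> msteps g rp k u (App t w) (App t' w)"
  by (erule msteps_map) (auto intro: msteps_wstep msteps_wrepl wstep.intros wrepl.intros)

lemma msteps_appR: "msteps g rp k u w w' \<Longrightarrow> msteps g rp k u (App t w) (App t w')"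
  by (erule msteps_map) (auto intro: msteps_wstep msteps_wrepl wstep.intros wrepl.intros)

lemma msteps_subL: "msteps g rp (Suc k) u t t' \<Longrightarrow> msteps g rp k u (Sub t w) (Sub t' w)"
  by (erule msteps_map) (auto intro: msteps_wstep msteps_wrepl wstep.intros wrepl.intros)

lemma msteps_subR: "msteps g rp k u w w' \<Longrightarrow> msteps g rp k u (Sub t w) (Sub t w')"
  by (erule msteps_map) (auto intro: msteps_wstep msteps_wrepl wstep.intros wrepl.intros)

lemma msteps_lift: "msteps g rp k u s t \<Longrightarrow> msteps g rp (k + n) u (lift n 0 s) (lift n 0 t)"
  by (erule msteps_map) (auto intro: msteps_wstep msteps_wrepl wstep_lift wrepl_lift_below)

lemma msteps_lift_Suc_0:
  "msteps g rp k u s t \<Longrightarrow> msteps g rp (Suc k) u (lift (Suc 0) 0 s) (lift (Suc 0) 0 t)"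
  using msteps_lift[of g rp k u s t 1] by simp

lemma msteps_down:
  "msteps g rp (Suc k) u s t \<Longrightarrow> \<not> free_in 0 s \<Longrightarrow> msteps g rp k u (down 0 s) (down 0 t)"
  by (erule msteps_map_invariant[where I = "\<lambda>x. \<not> free_in 0 x"])
    (auto intro: msteps_wstep msteps_wrepl wstep_down wrepl_down_below
      dest: free_in_wstep free_in_wrepl)

lemma msteps_contract_m_left:
  "msteps g rp k u t t' \<Longrightarrow> is_answer t \<Longrightarrow> msteps g rp k u (contract_m t v) (contract_m t' v)"
  by (erule msteps_map_invariant[where I = is_answer])
    (auto intro: msteps_wstep msteps_wrepl wstep_contract_m wrepl_contract_m
      dest: is_answer_wstep is_answer_wrepl)

lemma msteps_contract_m_right:
  "msteps g rp k u v v' \<Longrightarrow> is_answer t \<Longrightarrow> msteps g rp k u (contract_m t v) (contract_m t v')"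
proof (induction t arbitrary: k v v')
  case (Lam s)
  then show ?case by (simp add: msteps_subR)
next
  case (Sub t w)
  then show ?case by (simp add: msteps_subL msteps_lift_Suc_0)
qed auto

lemma msteps_contract_gcv_left:
  "msteps g rp k u t t' \<Longrightarrow> is_answer r \<Longrightarrow> msteps g rp k u (contract_gcv t r) (contract_gcv t' r)"
proof (induction r arbitrary: k t t')
  case (Sub r w)
  then show ?case by (simp add: msteps_subL msteps_lift_Suc_0)
qed auto

lemma msteps_contract_gcv_right:
  "msteps g rp k u r r' \<Longrightarrow> is_answer r \<Longrightarrow> msteps g rp k u (contract_gcv t r) (contract_gcv t r')"
  by (erule msteps_map_invariant[where I = is_answer])
    (auto intro: msteps_wstep msteps_wrepl wstep_contract_gcv wrepl_contract_gcv
      dest: is_answer_wstep is_answer_wrepl)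

lemma msteps_wsubst_arg:
  "msteps g rp k u v v' \<Longrightarrow> msteps g rp (Suc (k + i)) u (wsubst i v t) (wsubst i v' t)"
proof (induction t arbitrary: i)
  case (Var j)
  then show ?case using msteps_lift[OF Var, of "Suc i"] by (auto simp: add.commute)
next
  case (App t w)
  then show ?case by (metis msteps_appL msteps_appR msteps_trans wsubst.simps(3))
next
  case (Sub t w)
  have "msteps g rp (Suc (k + i)) u (Sub (wsubst (Suc i) v t) (wsubst i v w)) (Sub (wsubst (Suc i) v' t) (wsubst i v w))"
    using Sub.IH(1)[OF Sub.prems, of "Suc i"] by (simp add: msteps_subL)
  moreover have "msteps g rp (Suc (k + i)) u (Sub (wsubst (Suc i) v' t) (wsubst i v w)) (Sub (wsubst (Suc i) v' t) (wsubst i v' w))"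
    using Sub.IH(2)[OF Sub.prems] by (rule msteps_subR)
  ultimately show ?case by (simp add: msteps_trans)
qed simp

lemmas wsteps_appL = msteps_appL[where rp = False, simplified]
  and wsteps_appR = msteps_appR[where rp = False, simplified]
  and wsteps_subL = msteps_subL[where rp = False, simplified]
  and wsteps_subR = msteps_subR[where rp = False, simplified]
  and wsteps_down = msteps_down[where rp = False, simplified]
  and wsteps_contract_m_left = msteps_contract_m_left[where rp = False, simplified]
  and wsteps_contract_m_right = msteps_contract_m_right[where rp = False, simplified]
  and wsteps_contract_gcv_left = msteps_contract_gcv_left[where rp = False, simplified]
  and wsteps_contract_gcv_right = msteps_contract_gcv_right[where rp = False, simplified]
  and wsteps_wsubst_arg = msteps_wsubst_arg[where rp = False, simplified]

lemma wsteps_Sub_wsubst: "(wstep g)\<^sup>*\<^sup>* (Sub t u) (Sub (wsubst 0 u t) u)"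
  by (rule rtranclp_map[OF wrepl_star_wsubst, where f = "\<lambda>x. Sub x u"]) (auto intro: wstep.e)

lemma wstep_Sub_wsubst:
  assumes "wstep g t t'"
  shows "(wstep g)\<^sup>*\<^sup>* (Sub (wsubst 0 u t) u) (Sub (wsubst 0 u t') u)"
proof -
  obtain t'' where "wstep g (wsubst 0 u t) t''" "wsubst 0 u t'' = wsubst 0 u t'"
    using wstep_wsubst[OF assms] by blast
  then show ?thesis
    using wsteps_Sub_wsubst[of g t'' u] by (metis converse_rtranclp_into_rtranclp wstep.subL)
qed

lemma wsteps_Sub_wsubst_mono:
  "(wstep g)\<^sup>*\<^sup>* t t' \<Longrightarrow> (wstep g)\<^sup>*\<^sup>* (Sub (wsubst 0 u t) u) (Sub (wsubst 0 u t') u)"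
  by (erule rtranclp_map[where f = "\<lambda>x. Sub (wsubst 0 u x) u"]) (rule wstep_Sub_wsubst)

lemma msteps_Sub_wsubst:
  "msteps g rp (Suc k) v t t' \<Longrightarrow> msteps g rp k v (Sub (wsubst 0 u t) u) (Sub (wsubst 0 u t') u)"
  by (erule msteps_map)
    (auto intro: msteps_wsteps wstep_Sub_wsubst msteps_wrepl wrepl.subL wrepl_wsubst_below)

lemma wsteps_Sub_wsubst_of_msteps:
  "msteps g rp 0 u t t' \<Longrightarrow> (wstep g)\<^sup>*\<^sup>* (Sub (wsubst 0 u t) u) (Sub (wsubst 0 u t') u)"
  unfolding msteps_def
  by (erule rtranclp_map[where f = "\<lambda>x. Sub (wsubst 0 u x) u"])
    (auto intro: wstep_Sub_wsubst simp: wsubst_wrepl)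

section \<open>The development map\<close>

definition gcv_redex :: "bool \<Rightarrow> trm \<Rightarrow> trm \<Rightarrow> bool" where
  "gcv_redex g t u \<longleftrightarrow> g \<and> is_answer u \<and> \<not> free_in 0 t"

text \<open>Redexes are recognised in the source term, so redexes created by the development
  itself are left alone.\<close>

primrec develop :: "bool \<Rightarrow> trm \<Rightarrow> trm" where
  "develop g (Var i) = Var i"
| "develop g (Lam t) = Lam t"
| "develop g (App t u) =
    (if is_answer t then contract_m (develop g t) (develop g u) else App (develop g t) (develop g u))"
| "develop g (Sub t u) =
    (if gcv_redex g t u then contract_gcv (down 0 (develop g t)) (develop g u)
     else Sub (wsubst 0 (develop g u) (develop g t)) (develop g u))"

lemma develop_Sub_gcv:
  "gcv_redex g t u \<Longrightarrow> develop g (Sub t u) = contract_gcv (down 0 (develop g t)) (develop g u)"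
  by simp

lemma develop_Sub_not_gcv:
  "\<not> gcv_redex g t u \<Longrightarrow> develop g (Sub t u) = Sub (wsubst 0 (develop g u) (develop g t)) (develop g u)"
  by simp

declare develop.simps(4) [simp del]

lemma is_answer_develop: "is_answer t \<Longrightarrow> is_answer (develop g t)"
proof (induction t)
  case (Sub t u)
  then show ?case
    by (cases "gcv_redex g t u") (auto simp: develop_Sub_gcv develop_Sub_not_gcv gcv_redex_def)
qed auto

lemma free_in_develop: "free_in n (develop g t) \<Longrightarrow> free_in n t"
proof (induction t arbitrary: n)
  case (App t u)
  then show ?case by (auto simp: free_in_contract_m is_answer_develop split: if_splits)
next
  case (Sub t u)
  show ?case
  proof (cases "gcv_redex g t u")
    case True
    then have "\<not> free_in 0 (develop g t)" using Sub.IH(1) unfolding gcv_redex_def by blast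
    moreover have "free_in n (down 0 (develop g t)) \<or> free_in n (develop g u)"
      using True Sub.prems by (simp add: develop_Sub_gcv free_in_contract_gcv)
    ultimately show ?thesis using free_in_down Sub.IH by fastforce
  next
    case False
    then have "free_in n (Sub (wsubst 0 (develop g u) (develop g t)) (develop g u))"
      using Sub.prems by (simp add: develop_Sub_not_gcv)
    then show ?thesis using free_in_wsubst[of "Suc n" 0 "develop g u" "develop g t"] Sub.IH by auto
  qed
qed auto

lemma not_free_in_develop: "\<not> free_in n t \<Longrightarrow> \<not> free_in n (develop g t)"
  using free_in_develop by blast

lemma develop_lift: "develop g (lift d c t) = lift d c (develop g t)"
proof (induction t arbitrary: c)
  case (App t u)
  then show ?case by (simp add: lift_contract_m)
next
  case (Sub t u)
  have gcv_lift: "gcv_redex g (lift d (Suc c) t) (lift d c u) = gcv_redex g t u"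
    by (simp add: gcv_redex_def free_in_lift)
  show ?case
  proof (cases "gcv_redex g t u")
    case True
    then have "\<not> free_in 0 (develop g t)" by (simp add: not_free_in_develop gcv_redex_def)
    then show ?thesis using True gcv_lift Sub.IH
      by (simp add: develop_Sub_gcv lift_contract_gcv down_0_lift_Suc)
  next
    case False
    then show ?thesis using gcv_lift Sub.IH by (simp add: develop_Sub_not_gcv lift_wsubst_below)
  qed
qed auto

text \<open>When the substitution is garbage, \<open>wsubst\<close> does nothing and one gcv-step remains.\<close>

lemma wsteps_develop_Sub_wsubst:
  "(wstep g)\<^sup>*\<^sup>* (Sub (wsubst 0 (develop g u) (develop g t)) (develop g u)) (develop g (Sub t u))"
proof (cases "gcv_redex g t u")
  case True
  then have "\<not> free_in 0 (develop g t)" by (simp add: not_free_in_develop gcv_redex_def)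
  then have "Sub (wsubst 0 (develop g u) (develop g t)) (develop g u)
      = Sub (lift (Suc 0) 0 (down 0 (develop g t))) (develop g u)"
    by (simp add: wsubst_not_free_in lift_down)
  moreover have "wstep g \<dots> (develop g (Sub t u))"
    using True by (auto intro: wstep.gcv simp: develop_Sub_gcv gcv_redex_def is_answer_develop)
  ultimately show ?thesis by simp
next
  case False
  then show ?thesis by (simp add: develop_Sub_not_gcv)
qed

lemma wsteps_develop_Sub_wsubst_mono:
  "(wstep g)\<^sup>*\<^sup>* x (develop g t) \<Longrightarrow>
   (wstep g)\<^sup>*\<^sup>* (Sub (wsubst 0 (develop g u) x) (develop g u)) (develop g (Sub t u))"
  using wsteps_Sub_wsubst_mono wsteps_develop_Sub_wsubst by (rule rtranclp_trans)

lemma wsteps_develop_Sub_gcv: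
  assumes "gcv_redex g t u" "(wstep g)\<^sup>*\<^sup>* x (develop g t)" "\<not> free_in 0 x"
  shows "(wstep g)\<^sup>*\<^sup>* (contract_gcv (down 0 x) (develop g u)) (develop g (Sub t u))"
  using wsteps_contract_gcv_left[OF wsteps_down[OF assms(2,3)]] assms(1)
  by (simp add: develop_Sub_gcv gcv_redex_def is_answer_develop)

lemma wsteps_App_develop: "(wstep g)\<^sup>*\<^sup>* (App (develop g t) (develop g u)) (develop g (App t u))"
  by (auto intro: wstep.m is_answer_develop)

lemma wsteps_Sub_develop: "(wstep g)\<^sup>*\<^sup>* (Sub (develop g t) (develop g u)) (develop g (Sub t u))"
  using wsteps_Sub_wsubst wsteps_develop_Sub_wsubst by (rule rtranclp_trans)

lemma wsteps_develop: "(wstep g)\<^sup>*\<^sup>* t (develop g t)"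
proof (induction t)
  case (App t u)
  then show ?case by (meson wsteps_App_develop wsteps_appL wsteps_appR rtranclp_trans)
next
  case (Sub t u)
  then show ?case by (meson wsteps_Sub_develop wsteps_subL wsteps_subR rtranclp_trans)
qed auto

lemma wsteps_contract_m_develop:
  "is_answer t \<Longrightarrow> (wstep g)\<^sup>*\<^sup>* (contract_m (develop g t) (develop g u)) (develop g (contract_m t u))"
proof (induction t arbitrary: u)
  case (Lam s)
  have "(wstep g)\<^sup>*\<^sup>* (contract_m (develop g (Lam s)) (develop g u)) (Sub (develop g s) (develop g u))"
    by (simp add: wsteps_subL wsteps_develop)
  also have "(wstep g)\<^sup>*\<^sup>* \<dots> (develop g (contract_m (Lam s) u))"
    by (simp add: wsteps_Sub_develop)
  finally show ?case .
next
  case (Sub t w)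
  let ?u = "lift (Suc 0) 0 u" and ?du = "lift (Suc 0) 0 (develop g u)"
  have t: "is_answer t" using Sub.prems by simp
  have IH: "(wstep g)\<^sup>*\<^sup>* (contract_m (develop g t) ?du) (develop g (contract_m t ?u))"
    using Sub.IH(1)[OF t, of ?u] by (simp add: develop_lift)
  show ?case
  proof (cases "gcv_redex g t w")
    case True
    then have nf: "\<not> free_in 0 (develop g t)" and w: "is_answer (develop g w)"
      by (auto simp: not_free_in_develop gcv_redex_def is_answer_develop)
    have "contract_m (develop g (Sub t w)) (develop g u)
        = contract_gcv (down 0 (contract_m (develop g t) ?du)) (develop g w)"
      using True t w nf
      by (simp add: develop_Sub_gcv contract_gcv_contract_m is_answer_develop down_contract_m free_in_lift)
    moreover have "gcv_redex g (contract_m t ?u) w" "\<not> free_in 0 (contract_m (develop g t) ?du)"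
      using True t nf by (auto simp: gcv_redex_def free_in_contract_m free_in_lift is_answer_develop)
    ultimately show ?thesis using wsteps_develop_Sub_gcv[of g "contract_m t ?u" w, OF _ IH] by simp
  next
    case False
    have "(wstep g)\<^sup>*\<^sup>* (contract_m (develop g (Sub t w)) (develop g u))
        (Sub (wsubst 0 (develop g w) (contract_m (develop g t) ?du)) (develop g w))"
      using False wsteps_Sub_wsubst[of g "contract_m (wsubst 0 (develop g w) (develop g t)) ?du" "develop g w"]
      by (simp add: develop_Sub_not_gcv wsubst_contract_m_left is_answer_develop t)
    then show ?thesis using wsteps_develop_Sub_wsubst_mono[OF IH] by (simp add: rtranclp_trans)
  qed
qed auto

lemma wsteps_contract_gcv_develop:
  "is_answer r \<Longrightarrow> (wstep g)\<^sup>*\<^sup>* (contract_gcv (develop g t) (develop g r)) (develop g (contract_gcv t r))"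
proof (induction r arbitrary: t)
  case (Sub r w)
  let ?t = "lift (Suc 0) 0 t" and ?dt = "lift (Suc 0) 0 (develop g t)"
  have r: "is_answer r" using Sub.prems by simp
  have IH: "(wstep g)\<^sup>*\<^sup>* (contract_gcv ?dt (develop g r)) (develop g (contract_gcv ?t r))"
    using Sub.IH(1)[OF r, of ?t] by (simp add: develop_lift)
  show ?case
  proof (cases "gcv_redex g r w")
    case True
    then have nf: "\<not> free_in 0 (develop g r)" and w: "is_answer (develop g w)"
      by (auto simp: not_free_in_develop gcv_redex_def is_answer_develop)
    have "contract_gcv (develop g t) (develop g (Sub r w))
        = contract_gcv (down 0 (contract_gcv ?dt (develop g r))) (develop g w)"
      using True w nf by (simp add: develop_Sub_gcv contract_gcv_assoc down_contract_gcv free_in_lift)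
    moreover have "gcv_redex g (contract_gcv ?t r) w" "\<not> free_in 0 (contract_gcv ?dt (develop g r))"
      using True nf free_in_contract_gcv[of 0 ?t r] free_in_contract_gcv[of 0 ?dt "develop g r"]
      by (auto simp: gcv_redex_def free_in_lift)
    ultimately show ?thesis using wsteps_develop_Sub_gcv[of g "contract_gcv ?t r" w, OF _ IH] by simp
  next
    case False
    then have "contract_gcv (develop g t) (develop g (Sub r w))
        = Sub (wsubst 0 (develop g w) (contract_gcv ?dt (develop g r))) (develop g w)"
      using r by (simp add: develop_Sub_not_gcv wsubst_contract_gcv is_answer_develop
          wsubst_not_free_in free_in_lift)
    then show ?thesis using wsteps_develop_Sub_wsubst_mono[OF IH] by simp
  qed
qed auto

section \<open>The Z-property of the development map\<close>

lemma msteps_develop_appL: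
  assumes "msteps g rp k u (develop g t) (develop g t')" "is_answer t \<Longrightarrow> is_answer t'"
  shows "msteps g rp k u (develop g (App t w)) (develop g (App t' w))"
proof (cases "is_answer t")
  case True
  then show ?thesis using assms msteps_contract_m_left[OF assms(1)] by (simp add: is_answer_develop)
next
  case False
  then have "msteps g rp k u (develop g (App t w)) (App (develop g t') (develop g w))"
    using msteps_appL[OF assms(1)] by simp
  then show ?thesis by (blast intro: msteps_trans msteps_wsteps wsteps_App_develop)
qed

lemma msteps_develop_appR:
  "msteps g rp k u (develop g w) (develop g w') \<Longrightarrow>
   msteps g rp k u (develop g (App t w)) (develop g (App t w'))"
  by (cases "is_answer t") (simp_all add: msteps_contract_m_right is_answer_develop msteps_appR)

lemma msteps_develop_subL:
  assumes "msteps g rp (Suc k) u (develop g t) (develop g t')" "free_in 0 t' \<Longrightarrow> free_in 0 t"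
  shows "msteps g rp k u (develop g (Sub t w)) (develop g (Sub t' w))"
proof (cases "gcv_redex g t w")
  case True
  then have "gcv_redex g t' w" "\<not> free_in 0 (develop g t)"
    using assms(2) by (auto simp: gcv_redex_def not_free_in_develop)
  then show ?thesis
    using True msteps_contract_gcv_left[OF msteps_down[OF assms(1)]]
    by (simp add: develop_Sub_gcv gcv_redex_def is_answer_develop)
next
  case False
  then have "msteps g rp k u (develop g (Sub t w)) (Sub (wsubst 0 (develop g w) (develop g t')) (develop g w))"
    using msteps_Sub_wsubst[OF assms(1)] by (simp add: develop_Sub_not_gcv)
  then show ?thesis by (blast intro: msteps_trans msteps_wsteps wsteps_develop_Sub_wsubst)
qed

lemma msteps_develop_subR:
  assumes "msteps g rp k u (develop g w) (develop g w')" "is_answer w \<Longrightarrow> is_answer w'"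
  shows "msteps g rp k u (develop g (Sub t w)) (develop g (Sub t w'))"
proof (cases "gcv_redex g t w")
  case True
  then have "gcv_redex g t w'" using assms(2) by (simp add: gcv_redex_def)
  then show ?thesis
    using True msteps_contract_gcv_right[OF assms(1)]
    by (simp add: develop_Sub_gcv gcv_redex_def is_answer_develop)
next
  case False
  let ?t = "develop g t" and ?w = "develop g w" and ?w' = "develop g w'"
  have "msteps g rp k u (develop g (Sub t w)) (Sub (wsubst 0 ?w' ?t) ?w)"
    using False msteps_subL[OF msteps_wsubst_arg[OF assms(1), of 0 ?t]] by (simp add: develop_Sub_not_gcv)
  moreover have "msteps g rp k u (Sub (wsubst 0 ?w' ?t) ?w) (Sub (wsubst 0 ?w' ?t) ?w')"
    by (rule msteps_subR[OF assms(1)])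
  moreover have "msteps g rp k u (Sub (wsubst 0 ?w' ?t) ?w') (develop g (Sub t w'))"
    by (rule msteps_wsteps[OF wsteps_develop_Sub_wsubst])
  ultimately show ?thesis by (blast intro: msteps_trans)
qed

lemma msteps_develop_wrepl: "wrepl k u t t' \<Longrightarrow> msteps g True k (develop g u) (develop g t) (develop g t')"
proof (induction rule: wrepl.induct)
  case (var k u)
  then show ?case by (simp add: develop_lift msteps_wrepl wrepl.var)
next
  case (appL k u t t' w)
  then show ?case by (blast intro: msteps_develop_appL is_answer_wrepl)
next
  case (appR k u w w' t)
  then show ?case by (blast intro: msteps_develop_appR)
next
  case (subL k u t t' w)
  then show ?case using free_in_wrepl_below[OF subL.hyps, of 0] by (blast intro: msteps_develop_subL)
next
  case (subR k u w w' t)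
  then show ?case by (blast intro: msteps_develop_subR is_answer_wrepl)
qed

lemma wsteps_develop_Sub_wrepl:
  assumes "wrepl 0 u t t'"
  shows "(wstep g)\<^sup>*\<^sup>* (develop g (Sub t u)) (develop g (Sub t' u))"
proof -
  have "\<not> gcv_redex g t u" using wrepl_free_in[OF assms] by (simp add: gcv_redex_def)
  then have "develop g (Sub t u) = Sub (wsubst 0 (develop g u) (develop g t)) (develop g u)"
    by (rule develop_Sub_not_gcv)
  also have "(wstep g)\<^sup>*\<^sup>* \<dots> (Sub (wsubst 0 (develop g u) (develop g t')) (develop g u))"
    by (rule wsteps_Sub_wsubst_of_msteps[OF msteps_develop_wrepl[OF assms]])
  also have "(wstep g)\<^sup>*\<^sup>* \<dots> (develop g (Sub t' u))"
    by (rule wsteps_develop_Sub_wsubst)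
  finally show ?thesis .
qed

lemma wsteps_develop_wstep: "wstep g t t' \<Longrightarrow> (wstep g)\<^sup>*\<^sup>* (develop g t) (develop g t')"
proof (induction rule: wstep.induct)
  case (m t u)
  then show ?case by (simp add: wsteps_contract_m_develop)
next
  case (e u t t')
  then show ?case by (rule wsteps_develop_Sub_wrepl)
next
  case (gcv r t)
  then have "develop g (Sub (lift (Suc 0) 0 t) r) = contract_gcv (develop g t) (develop g r)"
    by (simp add: gcv_redex_def free_in_lift develop_Sub_gcv develop_lift)
  then show ?case using wsteps_contract_gcv_develop[OF gcv(2)] by simp
next
  case (appL t t' u)
  then show ?case
    using msteps_develop_appL[where rp = False] is_answer_wstep by simp
next
  case (appR u u' t)
  then show ?case using msteps_develop_appR[where rp = False] by simp
next
  case (subL t t' u)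
  then show ?case
    using msteps_develop_subL[where rp = False] free_in_wstep by simp
next
  case (subR u u' t)
  then show ?case
    using msteps_develop_subR[where rp = False] is_answer_wstep by simp
qed

lemma wsteps_to_develop: "wstep g t t' \<Longrightarrow> (wstep g)\<^sup>*\<^sup>* t' (develop g t)"
proof (induction rule: wstep.induct)
  case (m t u)
  have "(wstep g)\<^sup>*\<^sup>* (contract_m t u) (contract_m (develop g t) u)"
    using m by (simp add: wsteps_contract_m_left wsteps_develop)
  also have "(wstep g)\<^sup>*\<^sup>* \<dots> (contract_m (develop g t) (develop g u))"
    using m by (simp add: wsteps_contract_m_right wsteps_develop is_answer_develop)
  finally show ?case using m by simp
next
  case (e u t t')
  have "(wstep g)\<^sup>*\<^sup>* (Sub t' u) (Sub (wsubst 0 u t) u)"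
    using wsteps_Sub_wsubst[of g t' u] wsubst_wrepl[OF e] by simp
  also have "(wstep g)\<^sup>*\<^sup>* \<dots> (Sub (wsubst 0 (develop g u) t) (develop g u))"
    by (meson wsteps_develop wsteps_wsubst_arg wsteps_subL wsteps_subR rtranclp_trans)
  also have "(wstep g)\<^sup>*\<^sup>* \<dots> (develop g (Sub t u))"
    by (rule wsteps_develop_Sub_wsubst_mono[OF wsteps_develop])
  finally show ?case .
next
  case (gcv r t)
  have "(wstep g)\<^sup>*\<^sup>* (contract_gcv t r) (contract_gcv (develop g t) r)"
    using gcv by (simp add: wsteps_contract_gcv_left wsteps_develop)
  also have "(wstep g)\<^sup>*\<^sup>* \<dots> (contract_gcv (develop g t) (develop g r))"
    using gcv by (simp add: wsteps_contract_gcv_right wsteps_develop)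
  also have "\<dots> = develop g (Sub (lift (Suc 0) 0 t) r)"
    using gcv by (simp add: gcv_redex_def free_in_lift develop_Sub_gcv develop_lift)
  finally show ?case .
qed (meson wsteps_App_develop wsteps_Sub_develop wsteps_develop wsteps_appL wsteps_appR
      wsteps_subL wsteps_subR rtranclp_trans)+

lemma confluent_wstep: "confluent (wstep g)"
  using wsteps_develop wsteps_to_develop wsteps_develop_wstep by (rule confluent_if_Z_property)

theorem theorem4p8:
  shows "confluent step_w \<and> confluent step_w_nogcv"
  by (simp add: step_w_eq_wstep step_w_nogcv_eq_wstep confluent_wstep)

end
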